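(* Let $\mathfrak{R}$ be either $\mathbb{F}_q$ ($q$ a prime power) or $\mathbb{Z}_k$ ($k\ge 2$), with character $\chi$ as in the context. Let $C$ be an $\mathfrak{R}$-linear code of length $n$ and $\bm{w}\in\mathfrak{R}^n$. Then \[ Jac^{av}(C^{\perp},\bm{w}; x_{a} : a \in \mathfrak{R}^{2})=\frac{1}{|C|}\,Jac^{av}\Big(C,\bm{w};\ \sum_{b\in\mathfrak{R}}\chi(a_1 b)\,x_{(b,a_2)} : a=(a_1,a_2)\in\mathfrak{R}^{2}\Big), \] where the right-hand side is $Jac^{av}(C,\bm{w};x_a:a\in\mathfrak{R}^2)$ with each $x_{(a_1,a_2)}$ replaced by $\sum_{b}\chi(a_1b)x_{(b,a_2)}$.
   Context: An $\mathbb{F}_q$-linear code of length $n$ is a subspace of $\mathbb{F}_q^n$; a $\mathbb{Z}_k$-linear code is an additive subgroup of $\mathbb{Z}_k^n$. $C^\perp=\{\bm{v}\in\mathfrak{R}^n : \sum_i u_iv_i=0\ \forall \bm{u}\in C\}$. The character $\chi$: if $\mathfrak{R}=\mathbb{F}_q$, $q=p^f$, fix a root $\lambda$ of a primitive irreducible polynomial of degree $f$ over $\mathbb{F}_p$, write $\alpha=\alpha_0+\alpha_1\lambda+\cdots+\alpha_{f-1}\lambda^{f-1}$ ($\alpha_i\in\mathbb{F}_p$) and set $\chi(\alpha)=\zeta_p^{\alpha_0}$; if $\mathfrak{R}=\mathbb{Z}_k$, $\chi(\alpha)=\zeta_k^{\alpha}$ ($\zeta_m$ a primitive $m$-th root of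 unity). For $a\in\mathfrak{R}^2$, $r_a(\bm{u};\bm{w})=\#\{i:(u_i,w_i)=a\}$, and $Jac(C,\bm{w};x_a:a\in\mathfrak{R}^2)=\sum_{\bm{u}\in C}\prod_{a\in\mathfrak{R}^2}x_a^{r_a(\bm{u};\bm{w})}$. For $\sigma\in S_n$ and $\bm{u}\in\mathfrak{R}^n$, $\bm{u}^\sigma=(u_{\sigma(1)},\dots,u_{\sigma(n)})$ and $C^\sigma=\{\bm{u}^\sigma:\bm{u}\in C\}$. The average Jacobi polynomial is $Jac^{av}(C,\bm{w};x_a:a\in\mathfrak{R}^2)=\frac{1}{n!}\sum_{\sigma\in S_n}Jac(C^\sigma,\bm{w};x_a:a\in\mathfrak{R}^2)$. *)

theory Defs
  imports "HOL-Computational_Algebra.Primes" "HOL-Combinatorics.Permutations"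
    "Berlekamp_Zassenhaus.Finite_Field" Complex_Main
begin

text \<open>Vectors of length n over a ring are lists of length n (coordinates 0..n-1).\<close>

definition vecs :: "nat \<Rightarrow> 'r list set" where
  "vecs n = {u. length u = n}"

definition vadd :: "'r::comm_ring_1 list \<Rightarrow> 'r list \<Rightarrow> 'r list" where
  "vadd u v = map2 (+) u v"

definition vsmult :: "'r::comm_ring_1 \<Rightarrow> 'r list \<Rightarrow> 'r list" where
  "vsmult c u = map (\<lambda>x. c * x) u"

definition linear_code_field :: "nat \<Rightarrow> 'r::field list set \<Rightarrow> bool" where
  "linear_code_field n C \<longleftrightarrow> C \<subseteq> vecs n \<and> replicate n 0 \<in> C \<and>
     (\<forall>u\<in>C. \<forall>v\<in>C. vadd u v \<in> C) \<and> (\<forall>c. \<forall>u\<in>C. vsmult c u \<in> C)"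

text \<open>Z_k-linear code of length n: an additive subgroup of Z_k^n.\<close>
definition additive_code :: "nat \<Rightarrow> 'r::comm_ring_1 list set \<Rightarrow> bool" where
  "additive_code n C \<longleftrightarrow> C \<subseteq> vecs n \<and> replicate n 0 \<in> C \<and>
     (\<forall>u\<in>C. \<forall>v\<in>C. vadd u v \<in> C) \<and> (\<forall>u\<in>C. map uminus u \<in> C)"

definition dual_code :: "nat \<Rightarrow> 'r::comm_ring_1 list set \<Rightarrow> 'r list set" where
  "dual_code n C = {v \<in> vecs n. \<forall>u\<in>C. (\<Sum>i<n. u ! i * v ! i) = 0}"

text \<open>u^sigma = (u_{sigma(1)},...,u_{sigma(n)}), with 0-based indices.\<close>
definition vperm :: "nat \<Rightarrow> (nat \<Rightarrow> nat) \<Rightarrow> 'r list \<Rightarrow> 'r list" where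
  "vperm n \<sigma> u = map (\<lambda>i. u ! \<sigma> i) [0..<n]"

definition code_perm :: "nat \<Rightarrow> (nat \<Rightarrow> nat) \<Rightarrow> 'r list set \<Rightarrow> 'r list set" where
  "code_perm n \<sigma> C = vperm n \<sigma> ` C"

definition r_count :: "nat \<Rightarrow> 'r \<times> 'r \<Rightarrow> 'r list \<Rightarrow> 'r list \<Rightarrow> nat" where
  "r_count n a u w = card {i. i < n \<and> (u ! i, w ! i) = a}"

text \<open>Jacobi polynomial, evaluated at an assignment x of complex values to the
  indeterminates x_a, a in R^2.\<close>
definition jac :: "nat \<Rightarrow> 'r::finite list set \<Rightarrow> 'r list \<Rightarrow> ('r \<times> 'r \<Rightarrow> complex) \<Rightarrow> complex" where
  "jac n C w x = (\<Sum>u\<in>C. \<Prod>a\<in>UNIV. x a ^ r_count n a u w)"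

definition jac_av :: "nat \<Rightarrow> 'r::finite list set \<Rightarrow> 'r list \<Rightarrow> ('r \<times> 'r \<Rightarrow> complex) \<Rightarrow> complex" where
  "jac_av n C w x = (\<Sum>\<sigma> | \<sigma> permutes {..<n}. jac n (code_perm n \<sigma> C) w x) / of_nat (fact n)"

definition subst_chi :: "('r::{finite,comm_ring_1} \<Rightarrow> complex) \<Rightarrow> ('r \<times> 'r \<Rightarrow> complex) \<Rightarrow> 'r \<times> 'r \<Rightarrow> complex" where
  "subst_chi chi x a = (\<Sum>b\<in>UNIV. chi (fst a * b) * x (b, snd a))"

definition primitive_root_of_unity :: "nat \<Rightarrow> complex \<Rightarrow> bool" where
  "primitive_root_of_unity m z \<longleftrightarrow> z ^ m = 1 \<and> (\<forall>j. 0 < j \<and> j < m \<longrightarrow> z ^ j \<noteq> 1)"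

definition ff_degree :: "'a::finite_field itself \<Rightarrow> nat" where
  "ff_degree _ = (THE f. CARD('a) = CHAR('a) ^ f)"

text \<open>lam is a primitive element of F_q (a root of a primitive polynomial over F_p,
  of degree f), i.e. a generator of the multiplicative group.\<close>
definition primitive_element :: "'a::finite_field \<Rightarrow> bool" where
  "primitive_element lam \<longleftrightarrow> (\<forall>x. x \<noteq> 0 \<longrightarrow> (\<exists>i::nat. x = lam ^ i))"

definition ff_coords :: "'a::finite_field \<Rightarrow> 'a \<Rightarrow> nat \<Rightarrow> nat" where
  "ff_coords lam \<alpha> = (THE c. (\<forall>i. c i < CHAR('a)) \<and> (\<forall>i\<ge>ff_degree TYPE('a). c i = 0) \<and>
      \<alpha> = (\<Sum>i<ff_degree TYPE('a). of_nat (c i) * lam ^ i))"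

definition chi_ff :: "'a::finite_field \<Rightarrow> complex \<Rightarrow> 'a \<Rightarrow> complex" where
  "chi_ff lam \<zeta> \<alpha> = \<zeta> ^ ff_coords lam \<alpha> 0"

text \<open>Z_k is modelled by the type 'k mod_ring with k = CARD('k) >= 2.\<close>
definition chi_zk :: "complex \<Rightarrow> 'k::nontriv mod_ring \<Rightarrow> complex" where
  "chi_zk \<zeta> \<alpha> = \<zeta> ^ nat (to_int_mod_ring \<alpha>)"

end

theory Submission
  imports Defs "HOL-Number_Theory.Cong"
begin

(* Orthogonality of characters: for an additive character chi of R and an additive code C, the
   sum of chi(u.v) over u in C is |C| if chi(u.v) = 1 for all u in C, and 0 otherwise.  Expanding
   each substituted indeterminate sum_b chi(u_i b) x_(b,w_i) in Jac(C, w) and exchanging the sums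
   over u in C and v in R^n therefore gives |C| Jac(C^perp, w), provided chi is nondegenerate on C:
   chi(u.v) = 1 for all u in C only if v lies in C^perp.  As Jac(C^sigma, w) = Jac(C, w^(sigma^-1)),
   the identity for every w passes to the averages.
   On Z_k the character is trivial only at 0; on F_q it has chi(1) = zeta /= 1, and an F_q-linear
   code can scale any nonzero u.v to 1.  Additivity of chi on F_q needs the coordinates with respect
   to 1, lam, ..., lam^(f-1) to be well defined: for the least d with lam^d in the F_p-span of the
   lower powers, that span has p^d elements and is closed under multiplication by lam, hence is all
   of F_q as lam is primitive; so d = f and the lower powers are independent. *)

section \<open>Jacobi polynomials of dual codes\<close>

definition dotp :: "nat \<Rightarrow> 'r::comm_ring_1 list \<Rightarrow> 'r list \<Rightarrow> 'r" where
  "dotp n u v = (\<Sum>i<n. u ! i * v ! i)"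

definition additive_char :: "('r::comm_ring_1 \<Rightarrow> complex) \<Rightarrow> bool" where
  "additive_char \<chi> \<longleftrightarrow> \<chi> 0 = 1 \<and> (\<forall>a b. \<chi> (a + b) = \<chi> a * \<chi> b)"

lemma dual_code_eq: "dual_code n C = {v \<in> vecs n. \<forall>u\<in>C. dotp n u v = 0}"
  by (simp add: dual_code_def dotp_def)

lemma finite_vecs [simp]: "finite (vecs n :: 'r::finite list set)"
  unfolding vecs_def using finite_lists_length_eq[of "UNIV :: 'r set" n] by simp

lemma additive_code_finite: "additive_code n (C :: 'r::{finite,comm_ring_1} list set) \<Longrightarrow> finite C"
  unfolding additive_code_def using finite_subset finite_vecs by blast

lemma prod_power_r_count:
  fixes y :: "'r::finite \<times> 'r \<Rightarrow> 'c::comm_monoid_mult"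
  shows "(\<Prod>a\<in>UNIV. y a ^ r_count n a u w) = (\<Prod>i<n. y (u ! i, w ! i))"
proof -
  have "(\<Prod>i<n. y (u ! i, w ! i)) = (\<Prod>a\<in>UNIV. \<Prod>i\<in>{i \<in> {..<n}. (u ! i, w ! i) = a}. y (u ! i, w ! i))"
    by (rule prod.group[symmetric]) auto
  also have "\<dots> = (\<Prod>a\<in>UNIV. y a ^ r_count n a u w)"
    by (rule prod.cong) (simp_all add: r_count_def)
  finally show ?thesis by simp
qed

lemma jac_eq_sum_prod: "jac n C w y = (\<Sum>u\<in>C. \<Prod>i<n. y (u ! i, w ! i))"
  unfolding jac_def prod_power_r_count ..

lemma prod_sum_eq_sum_vecs_prod:
  fixes f :: "nat \<Rightarrow> 'r::finite \<Rightarrow> 'c::comm_semiring_1"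
  shows "(\<Prod>i<n. \<Sum>b\<in>UNIV. f i b) = (\<Sum>v\<in>vecs n. \<Prod>i<n. f i (v ! i))"
proof -
  have "(\<Prod>i<n. \<Sum>b\<in>UNIV. f i b) = (\<Sum>g\<in>{..<n} \<rightarrow>\<^sub>E UNIV. \<Prod>i<n. f i (g i))"
    by (rule prod_sum_PiE) auto
  also have "\<dots> = (\<Sum>v\<in>vecs n. \<Prod>i<n. f i (v ! i))"
    by (rule sum.reindex_bij_witness[of _ "\<lambda>v. restrict (nth v) {..<n}" "\<lambda>g. map g [0..<n]"])
      (auto simp: vecs_def PiE_def extensional_def fun_eq_iff intro: nth_equalityI)
  finally show ?thesis .
qed

lemma additive_char_sum:
  assumes "additive_char \<chi>"
  shows "finite A \<Longrightarrow> \<chi> (\<Sum>i\<in>A. f i) = (\<Prod>i\<in>A. \<chi> (f i))"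
  by (induction A rule: finite_induct) (use assms in \<open>auto simp: additive_char_def\<close>)

lemma dotp_vadd:
  "length u = n \<Longrightarrow> length u' = n \<Longrightarrow> dotp n (vadd u u') v = dotp n u v + dotp n u' v"
  by (simp add: dotp_def vadd_def sum.distrib[symmetric] algebra_simps)

lemma bij_betw_vadd_code:
  assumes C: "additive_code n C" and u0: "u0 \<in> C"
  shows "bij_betw (vadd u0) C C"
proof (rule bij_betw_byWitness[where f' = "vadd (map uminus u0)"])
  have len: "length u = n" if "u \<in> C" for u
    using C that by (auto simp: additive_code_def vecs_def)
  show "\<forall>u\<in>C. vadd (map uminus u0) (vadd u0 u) = u" "\<forall>u\<in>C. vadd u0 (vadd (map uminus u0) u) = u"
    by (auto simp: vadd_def len u0 intro: nth_equalityI)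
  show "vadd u0 ` C \<subseteq> C" "vadd (map uminus u0) ` C \<subseteq> C"
    using C u0 by (auto simp: additive_code_def)
qed

lemma sum_additive_char_code:
  assumes \<chi>: "additive_char \<chi>" and C: "additive_code n C"
  shows "(\<Sum>u\<in>C. \<chi> (dotp n u v)) = (if \<forall>u\<in>C. \<chi> (dotp n u v) = 1 then of_nat (card C) else 0)"
proof (cases "\<forall>u\<in>C. \<chi> (dotp n u v) = 1")
  case False
  then obtain u0 where u0: "u0 \<in> C" "\<chi> (dotp n u0 v) \<noteq> 1" by blast
  have len: "length u = n" if "u \<in> C" for u
    using C that by (auto simp: additive_code_def vecs_def)
  define S where "S = (\<Sum>u\<in>C. \<chi> (dotp n u v))"
  have "S = (\<Sum>u\<in>C. \<chi> (dotp n (vadd u0 u) v))"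
    unfolding S_def by (rule sum.reindex_bij_betw[OF bij_betw_vadd_code[OF C u0(1)], symmetric])
  also have "\<dots> = \<chi> (dotp n u0 v) * S"
    using \<chi> by (simp add: S_def sum_distrib_left dotp_vadd len u0(1) additive_char_def)
  finally have "(1 - \<chi> (dotp n u0 v)) * S = 0" by (simp add: algebra_simps)
  then have "S = 0" using u0 by simp
  then show ?thesis by (subst if_not_P[OF False]) (simp add: S_def)
qed simp

lemma jac_dual_code:
  fixes \<chi> :: "'r::{finite,comm_ring_1} \<Rightarrow> complex"
  assumes \<chi>: "additive_char \<chi>" and C: "additive_code n C"
    and nondegenerate: "\<And>v. v \<in> vecs n \<Longrightarrow> \<forall>u\<in>C. \<chi> (dotp n u v) = 1 \<Longrightarrow> v \<in> dual_code n C"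
  shows "jac n (dual_code n C) w x = jac n C w (subst_chi \<chi> x) / of_nat (card C)"
proof -
  define F where "F v = (\<Prod>i<n. x (v ! i, w ! i))" for v
  have orth: "(\<Sum>u\<in>C. \<chi> (dotp n u v)) = (if v \<in> dual_code n C then of_nat (card C) else 0)"
    if "v \<in> vecs n" for v
    using sum_additive_char_code[OF \<chi> C] nondegenerate[OF that] \<chi>
    by (auto simp: dual_code_eq additive_char_def)
  have "jac n C w (subst_chi \<chi> x) = (\<Sum>u\<in>C. \<Prod>i<n. \<Sum>b\<in>UNIV. \<chi> (u ! i * b) * x (b, w ! i))"
    by (simp add: jac_eq_sum_prod subst_chi_def)
  also have "\<dots> = (\<Sum>u\<in>C. \<Sum>v\<in>vecs n. \<Prod>i<n. \<chi> (u ! i * v ! i) * x (v ! i, w ! i))"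
    by (simp add: prod_sum_eq_sum_vecs_prod)
  also have "\<dots> = (\<Sum>u\<in>C. \<Sum>v\<in>vecs n. \<chi> (dotp n u v) * F v)"
    by (simp add: prod.distrib F_def dotp_def additive_char_sum[OF \<chi>])
  also have "\<dots> = (\<Sum>v\<in>vecs n. F v * (\<Sum>u\<in>C. \<chi> (dotp n u v)))"
    by (subst sum.swap) (simp add: sum_distrib_left mult.commute)
  also have "\<dots> = (\<Sum>v\<in>vecs n. if v \<in> dual_code n C then of_nat (card C) * F v else 0)"
    by (rule sum.cong) (auto simp: orth)
  also have "\<dots> = of_nat (card C) * jac n (dual_code n C) w x"
    by (simp add: sum.If_cases sum_distrib_left dual_code_def Int_def conj_commute
        jac_eq_sum_prod F_def)
  finally show ?thesis
    using C additive_code_finite[OF C] by (auto simp: additive_code_def card_gt_0_iff)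
qed

lemma vperm_nth: "i < n \<Longrightarrow> vperm n \<sigma> u ! i = u ! \<sigma> i"
  by (simp add: vperm_def)

lemma inj_on_vperm:
  assumes \<sigma>: "\<sigma> permutes {..<n}"
  shows "inj_on (vperm n \<sigma>) (vecs n)"
proof (rule inj_onI)
  fix u v assume u: "u \<in> vecs n" and v: "v \<in> vecs n" and eq: "vperm n \<sigma> u = vperm n \<sigma> v"
  show "u = v"
  proof (rule nth_equalityI)
    show "length u = length v" using u v by (simp add: vecs_def)
    fix j assume "j < length u"
    then have j: "j < n" using u by (simp add: vecs_def)
    have "inv_into UNIV \<sigma> j < n" using \<sigma> j by (meson lessThan_iff permutes_in_image permutes_inv)
    then show "u ! j = v ! j"
      using arg_cong[OF eq, of "\<lambda>z. z ! inv_into UNIV \<sigma> j"] by (simp add: vperm_nth permutes_inverses[OF \<sigma>])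
  qed
qed

lemma jac_code_perm:
  assumes \<sigma>: "\<sigma> permutes {..<n}" and D: "D \<subseteq> vecs n"
  shows "jac n (code_perm n \<sigma> D) w x = jac n D (vperm n (inv_into UNIV \<sigma>) w) x"
proof -
  have \<sigma>_lt: "\<sigma> i < n" if "i < n" for i
    using permutes_in_image[OF \<sigma>] that by simp
  have "(\<Prod>i<n. x (vperm n \<sigma> u ! i, w ! i)) = (\<Prod>i<n. x (u ! i, vperm n (inv_into UNIV \<sigma>) w ! i))" for u
  proof -
    have "(\<Prod>i<n. x (u ! i, vperm n (inv_into UNIV \<sigma>) w ! i))
        = (\<Prod>i<n. x (u ! \<sigma> i, vperm n (inv_into UNIV \<sigma>) w ! \<sigma> i))"
      by (rule prod.reindex_bij_betw[OF permutes_imp_bij[OF \<sigma>], symmetric])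
    also have "\<dots> = (\<Prod>i<n. x (vperm n \<sigma> u ! i, w ! i))"
      by (intro prod.cong) (simp_all add: vperm_nth \<sigma>_lt permutes_inverses[OF \<sigma>])
    finally show ?thesis by simp
  qed
  moreover have "inj_on (vperm n \<sigma>) D"
    using inj_on_vperm[OF \<sigma>] D inj_on_subset by blast
  ultimately show ?thesis
    by (simp add: jac_eq_sum_prod code_perm_def sum.reindex)
qed

lemma jac_av_eq_of_jac_eq:
  assumes "\<And>w. jac n D w x = jac n C w y / c" and "C \<subseteq> vecs n" and "D \<subseteq> vecs n"
  shows "jac_av n D w x = jac_av n C w y / c"
  using assms by (simp add: jac_av_def jac_code_perm sum_divide_distrib[symmetric])

lemma jac_av_dual_code:
  fixes \<chi> :: "'r::{finite,comm_ring_1} \<Rightarrow> complex"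
  assumes \<chi>: "additive_char \<chi>" and C: "additive_code n C"
    and nondegenerate: "\<And>v. v \<in> vecs n \<Longrightarrow> \<forall>u\<in>C. \<chi> (dotp n u v) = 1 \<Longrightarrow> v \<in> dual_code n C"
  shows "jac_av n (dual_code n C) w x = jac_av n C w (subst_chi \<chi> x) / of_nat (card C)"
  using C by (intro jac_av_eq_of_jac_eq jac_dual_code[OF \<chi> C nondegenerate])
    (auto simp: additive_code_def dual_code_def)

lemma additive_code_if_linear_code_field:
  assumes "linear_code_field n C"
  shows "additive_code n C"
proof -
  have "map uminus u = vsmult (- 1) u" for u :: "'a list"
    by (simp add: vsmult_def)
  then show ?thesis
    using assms by (simp add: linear_code_field_def additive_code_def)
qed

text \<open>A linear code can scale a nonzero inner product to \<open>1\<close>, so \<open>\<chi> 1 \<noteq> 1\<close> is enough.\<close>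

lemma dual_code_if_char_trivial:
  fixes \<chi> :: "'a::field \<Rightarrow> complex"
  assumes C: "linear_code_field n C" and \<chi>1: "\<chi> 1 \<noteq> 1"
    and v: "v \<in> vecs n" and trivial: "\<forall>u\<in>C. \<chi> (dotp n u v) = 1"
  shows "v \<in> dual_code n C"
proof (rule ccontr)
  assume "v \<notin> dual_code n C"
  then obtain u where u: "u \<in> C" "dotp n u v \<noteq> 0"
    using v by (auto simp: dual_code_eq)
  have "length u = n" using C u(1) by (auto simp: linear_code_field_def vecs_def)
  then have "dotp n (vsmult (inverse (dotp n u v)) u) v = 1"
    using u(2) by (simp add: dotp_def vsmult_def mult.assoc flip: sum_distrib_left)
  moreover have "vsmult (inverse (dotp n u v)) u \<in> C"
    using C u(1) by (simp add: linear_code_field_def)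
  ultimately show False using trivial \<chi>1 by metis
qed

section \<open>The character of \<open>\<int>\<^sub>k\<close>\<close>

lemma power_mod_exponent:
  assumes "(z :: 'a::monoid_mult) ^ p = 1"
  shows "z ^ (m mod p) = z ^ m"
proof -
  have "z ^ m = z ^ (p * (m div p) + m mod p)" by simp
  also have "\<dots> = z ^ (m mod p)" by (simp only: power_add power_mult assms power_one mult_1)
  finally show ?thesis by simp
qed

lemma to_int_mod_ring_bounds:
  "0 \<le> to_int_mod_ring (a :: 'k::nontriv mod_ring) \<and> to_int_mod_ring a < int CARD('k)"
  using range_to_int_mod_ring by (metis atLeastLessThan_iff rangeI)

lemma additive_char_chi_zk:
  assumes "\<zeta> ^ CARD('k) = 1"
  shows "additive_char (chi_zk \<zeta> :: 'k::nontriv mod_ring \<Rightarrow> complex)"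
proof -
  have "nat (to_int_mod_ring (a + b)) = (nat (to_int_mod_ring a) + nat (to_int_mod_ring b)) mod CARD('k)"
    for a b :: "'k mod_ring"
    using to_int_mod_ring_bounds[of a] to_int_mod_ring_bounds[of b]
    by (simp add: to_int_mod_ring_add nat_mod_distrib nat_add_distrib)
  then show ?thesis
    using power_mod_exponent[OF assms] by (simp add: additive_char_def chi_zk_def power_add)
qed

lemma chi_zk_eq_1_iff:
  assumes "primitive_root_of_unity CARD('k) \<zeta>"
  shows "chi_zk \<zeta> (t :: 'k::nontriv mod_ring) = 1 \<longleftrightarrow> t = 0"
proof
  assume "chi_zk \<zeta> t = 1"
  moreover have "nat (to_int_mod_ring t) < CARD('k)"
    using to_int_mod_ring_bounds[of t] by linarith
  ultimately have "nat (to_int_mod_ring t) = 0"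
    using assms unfolding chi_zk_def primitive_root_of_unity_def by (metis gr0I)
  then show "t = 0"
    using to_int_mod_ring_bounds[of t] to_int_mod_ring_hom.hom_0_iff by (metis nat_0_iff order_antisym)
qed (simp add: chi_zk_def)

section \<open>Coordinates in a finite field and its character\<close>

definition prime_subfield :: "'a::finite_field set" where
  "prime_subfield = range of_nat"

lemma of_nat_in_prime_subfield [simp]: "of_nat j \<in> prime_subfield"
  by (simp add: prime_subfield_def)

lemma zero_in_prime_subfield [simp]: "0 \<in> prime_subfield"
  using of_nat_in_prime_subfield[of 0] by simp

lemma one_in_prime_subfield [simp]: "1 \<in> prime_subfield"
  using of_nat_in_prime_subfield[of 1] by simp

lemma prime_subfield_add: "x \<in> prime_subfield \<Longrightarrow> y \<in> prime_subfield \<Longrightarrow> x + y \<in> prime_subfield"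
  by (auto simp: prime_subfield_def simp flip: of_nat_add)

lemma prime_subfield_mult: "x \<in> prime_subfield \<Longrightarrow> y \<in> prime_subfield \<Longrightarrow> x * y \<in> prime_subfield"
  by (auto simp: prime_subfield_def simp flip: of_nat_mult)

lemma prime_subfield_uminus:
  assumes "x \<in> (prime_subfield :: 'a::finite_field set)"
  shows "- x \<in> prime_subfield"
proof -
  have "of_nat (CHAR('a) - 1) = (-1 :: 'a)"
    using CHAR_pos[where 'a = 'a] by (simp add: of_nat_diff Suc_le_eq)
  then have "- x = of_nat (CHAR('a) - 1) * x" by simp
  then show ?thesis
    using prime_subfield_mult[OF of_nat_in_prime_subfield assms] by simp
qed

lemma prime_subfield_diff: "x \<in> prime_subfield \<Longrightarrow> y \<in> prime_subfield \<Longrightarrow> x - y \<in> prime_subfield"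
  using prime_subfield_add prime_subfield_uminus by (metis diff_conv_add_uminus)

lemma inverse_eq_power_card_minus_2:
  fixes x :: "'a::finite_field"
  assumes "x \<noteq> 0"
  shows "inverse x = x ^ (CARD('a) - 2)"
proof -
  have "CARD('a) \<ge> 2"
    using card_mono[of UNIV "{0, 1 :: 'a}"] by simp
  then obtain m where m: "CARD('a) = Suc (Suc m)"
    by (metis add_2_eq_Suc le_Suc_ex)
  have "(x ^ m * x) * x = 1 * x"
    using finite_field_power_card_eq_same[of x] by (simp add: m mult_ac)
  then have "x * x ^ m = 1" using assms by (simp add: mult_ac)
  then show ?thesis using m by (simp add: inverse_unique)
qed

lemma prime_subfield_inverse: "x \<in> prime_subfield \<Longrightarrow> inverse x \<in> prime_subfield"
  by (cases "x = 0")
    (auto simp: inverse_eq_power_card_minus_2 prime_subfield_def simp flip: of_nat_power)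

lemma prime_subfield_eq: "(prime_subfield :: 'a::finite_field set) = of_nat ` {..<CHAR('a)}"
proof (intro equalityI subsetI)
  fix x :: 'a assume "x \<in> prime_subfield"
  then obtain j where "x = of_nat j"
    by (auto simp: prime_subfield_def)
  then show "x \<in> of_nat ` {..<CHAR('a)}"
    by (intro image_eqI[of _ _ "j mod CHAR('a)"]) simp_all
qed (auto simp: prime_subfield_def)

lemma inj_on_of_nat_CHAR: "inj_on (of_nat :: nat \<Rightarrow> 'a::semiring_1_cancel) {..<CHAR('a)}"
  by (rule inj_onI) (simp add: of_nat_eq_iff_cong_CHAR cong_def)

lemma card_prime_subfield: "card (prime_subfield :: 'a::finite_field set) = CHAR('a)"
  by (simp add: prime_subfield_eq card_image inj_on_of_nat_CHAR)

definition fp_span :: "'a::finite_field \<Rightarrow> nat \<Rightarrow> 'a set" where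
  "fp_span lam k = {\<Sum>i<k. c i * lam ^ i | c. \<forall>i. c i \<in> prime_subfield}"

lemma fp_spanI: "\<forall>i. c i \<in> prime_subfield \<Longrightarrow> (\<Sum>i<k. c i * lam ^ i) \<in> fp_span lam k"
  unfolding fp_span_def by blast

lemma fp_span_0: "fp_span lam 0 = {0}"
  unfolding fp_span_def by (auto intro: exI[of _ "\<lambda>_. 0"])

lemma fp_span_add:
  assumes "x \<in> fp_span lam k" "y \<in> fp_span lam k"
  shows "x + y \<in> fp_span lam k"
proof -
  obtain c d where "\<forall>i. c i \<in> prime_subfield" "\<forall>i. d i \<in> prime_subfield"
    and "x = (\<Sum>i<k. c i * lam ^ i)" "y = (\<Sum>i<k. d i * lam ^ i)"
    using assms unfolding fp_span_def by blast
  then show ?thesis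
    using fp_spanI[where c = "\<lambda>i. c i + d i" and k = k and lam = lam]
    by (simp add: prime_subfield_add distrib_right sum.distrib)
qed

lemma fp_span_smult:
  assumes "a \<in> prime_subfield" "x \<in> fp_span lam k"
  shows "a * x \<in> fp_span lam k"
proof -
  obtain c where "\<forall>i. c i \<in> prime_subfield" "x = (\<Sum>i<k. c i * lam ^ i)"
    using assms unfolding fp_span_def by blast
  then show ?thesis
    using fp_spanI[where c = "\<lambda>i. a * c i" and k = k and lam = lam] assms
    by (simp add: prime_subfield_mult sum_distrib_left mult.assoc)
qed

lemma fp_span_diff:
  assumes "x \<in> fp_span lam k" "y \<in> fp_span lam k"
  shows "x - y \<in> fp_span lam k"
proof -
  have "x + (- 1) * y \<in> fp_span lam k"
    using assms prime_subfield_uminus[OF one_in_prime_subfield] by (intro fp_span_add fp_span_smult)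
  then show ?thesis by simp
qed

lemma power_in_fp_span:
  assumes "i < k"
  shows "lam ^ i \<in> fp_span lam k"
proof -
  have "(\<Sum>j<k. (if j = i then 1 else 0) * lam ^ j) = (\<Sum>j<k. if j = i then lam ^ j else 0)"
    by (rule sum.cong) auto
  then show ?thesis
    using assms fp_spanI[where c = "\<lambda>j. if j = i then 1 else 0" and k = k and lam = lam] by simp
qed

lemma fp_span_Suc: "fp_span lam (Suc k) = (\<lambda>(v, a). v + a * lam ^ k) ` (fp_span lam k \<times> prime_subfield)"
proof (intro equalityI subsetI)
  fix x assume "x \<in> fp_span lam (Suc k)"
  then obtain c where c: "\<forall>i. c i \<in> prime_subfield" "x = (\<Sum>i<k. c i * lam ^ i) + c k * lam ^ k"
    unfolding fp_span_def by auto
  then show "x \<in> (\<lambda>(v, a). v + a * lam ^ k) ` (fp_span lam k \<times> prime_subfield)"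
    using fp_spanI[OF c(1)] by (intro image_eqI[of _ _ "(\<Sum>i<k. c i * lam ^ i, c k)"]) simp_all
next
  fix x assume "x \<in> (\<lambda>(v, a). v + a * lam ^ k) ` (fp_span lam k \<times> prime_subfield)"
  then obtain c a where c: "\<forall>i. c i \<in> prime_subfield" "a \<in> prime_subfield"
    and x: "x = (\<Sum>i<k. c i * lam ^ i) + a * lam ^ k"
    unfolding fp_span_def by auto
  have "(\<Sum>i<k. (c(k := a)) i * lam ^ i) = (\<Sum>i<k. c i * lam ^ i)"
    by (rule sum.cong) auto
  then have x_eq: "x = (\<Sum>i<Suc k. (c(k := a)) i * lam ^ i)"
    using x by simp
  have "\<forall>i. (c(k := a)) i \<in> prime_subfield"
    using c by simp
  then show "x \<in> fp_span lam (Suc k)"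
    unfolding x_eq by (rule fp_spanI)
qed

lemma mult_fp_span: "v \<in> fp_span lam k \<Longrightarrow> lam * v \<in> fp_span lam (Suc k)"
proof -
  assume "v \<in> fp_span lam k"
  then obtain c where c: "\<forall>i. c i \<in> prime_subfield" "v = (\<Sum>i<k. c i * lam ^ i)"
    unfolding fp_span_def by blast
  define d where "d j = (if j = 0 then 0 else c (j - 1))" for j
  have "lam * v = (\<Sum>i<Suc k. d i * lam ^ i)"
    unfolding sum.lessThan_Suc_shift by (simp add: d_def c(2) sum_distrib_left mult_ac)
  moreover have "\<forall>i. d i \<in> prime_subfield"
    using c(1) by (simp add: d_def)
  ultimately show ?thesis
    using fp_spanI[where c = d and k = "Suc k" and lam = lam] by simp
qed

lemma fp_span_Suc_unique:
  fixes lam :: "'a::finite_field"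
  assumes notin: "lam ^ k \<notin> fp_span lam k"
    and v: "v \<in> fp_span lam k" "v' \<in> fp_span lam k" and a: "a \<in> prime_subfield" "a' \<in> prime_subfield"
    and eq: "v + a * lam ^ k = v' + a' * lam ^ k"
  shows "a = a' \<and> v = v'"
proof (cases "a = a'")
  case False
  have "(a - a') * lam ^ k = v' - v"
    using eq by (simp add: algebra_simps)
  then have "inverse (a - a') * (v' - v) = (inverse (a - a') * (a - a')) * lam ^ k"
    by (simp only: mult.assoc)
  with False have "lam ^ k = inverse (a - a') * (v' - v)"
    by simp
  moreover have "inverse (a - a') * (v' - v) \<in> fp_span lam k"
    using v a by (intro fp_span_smult prime_subfield_inverse prime_subfield_diff fp_span_diff)
  ultimately show ?thesis using notin by simp
qed (use eq in simp)

lemma card_fp_span_Suc: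
  fixes lam :: "'a::finite_field"
  assumes "lam ^ k \<notin> fp_span lam k"
  shows "card (fp_span lam (Suc k)) = card (fp_span lam k) * CHAR('a)"
proof -
  have "inj_on (\<lambda>(v, a). v + a * lam ^ k) (fp_span lam k \<times> prime_subfield)"
    by (intro inj_onI) (clarsimp simp: fp_span_Suc_unique[OF assms])
  then show ?thesis
    by (simp add: fp_span_Suc card_image card_cartesian_product card_prime_subfield)
qed

lemma fp_span_eq_UNIV:
  assumes lam: "primitive_element lam" and "0 < k" and closed: "lam ^ k \<in> fp_span lam k"
  shows "fp_span lam k = UNIV"
proof -
  have mult_closed: "lam * v \<in> fp_span lam k" if v: "v \<in> fp_span lam k" for v
  proof -
    obtain v' a where v': "v' \<in> fp_span lam k" and a: "a \<in> prime_subfield"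
      and eq: "lam * v = v' + a * lam ^ k"
      using mult_fp_span[OF v] unfolding fp_span_Suc by auto
    show ?thesis
      unfolding eq by (intro fp_span_add v' fp_span_smult a closed)
  qed
  have powers: "lam ^ j \<in> fp_span lam k" for j
  proof (induction j)
    case 0
    show ?case by (rule power_in_fp_span[OF \<open>0 < k\<close>])
  next
    case (Suc j)
    show ?case unfolding power_Suc by (rule mult_closed[OF Suc])
  qed
  have "x \<in> fp_span lam k" for x
  proof (cases "x = 0")
    case True
    then show ?thesis using fp_spanI[of "\<lambda>_. 0" lam k] by simp
  next
    case False
    then obtain i where "x = lam ^ i" using lam unfolding primitive_element_def by blast
    then show ?thesis using powers by simp
  qed
  then show ?thesis by blast
qed

definition fp_degree :: "'a::finite_field \<Rightarrow> nat" where
  "fp_degree lam = (LEAST k. lam ^ k \<in> fp_span lam k)"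

lemma card_fp_span:
  fixes lam :: "'a::finite_field"
  assumes "\<And>j. j < k \<Longrightarrow> lam ^ j \<notin> fp_span lam j"
  shows "card (fp_span lam k) = CHAR('a) ^ k"
  using assms by (induction k) (simp_all add: fp_span_0 card_fp_span_Suc)

lemma ex_power_in_fp_span: "\<exists>k. (lam :: 'a::finite_field) ^ k \<in> fp_span lam k"
proof (rule ccontr)
  assume "\<not> ?thesis"
  then have "card (fp_span lam CARD('a)) = CHAR('a) ^ CARD('a)"
    by (intro card_fp_span) blast
  moreover have "CARD('a) < CHAR('a) ^ CARD('a)"
    using less_exp[of "CARD('a)"] power_mono[of 2 "CHAR('a)" "CARD('a)"]
      prime_ge_2_nat[OF CHAR_prime[where 'a = 'a]] by linarith
  ultimately show False
    using card_mono[of UNIV "fp_span lam CARD('a)"] by simp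
qed

lemma power_fp_degree_in_fp_span: "lam ^ fp_degree lam \<in> fp_span lam (fp_degree lam)"
  unfolding fp_degree_def using ex_power_in_fp_span by (rule LeastI_ex)

lemma power_notin_fp_span: "k < fp_degree lam \<Longrightarrow> lam ^ k \<notin> fp_span lam k"
  unfolding fp_degree_def by (rule not_less_Least)

lemma fp_degree_pos: "0 < fp_degree lam"
  using power_fp_degree_in_fp_span[of lam] by (cases "fp_degree lam") (simp_all add: fp_span_0)

lemma fp_span_fp_degree: "primitive_element lam \<Longrightarrow> fp_span lam (fp_degree lam) = UNIV"
  by (rule fp_span_eq_UNIV[OF _ fp_degree_pos power_fp_degree_in_fp_span])

lemma ff_degree_eq_fp_degree:
  assumes "primitive_element (lam :: 'a::finite_field)"
  shows "ff_degree TYPE('a) = fp_degree lam"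
proof -
  have "card (fp_span lam (fp_degree lam)) = CHAR('a) ^ fp_degree lam"
    by (rule card_fp_span) (rule power_notin_fp_span)
  then have card: "CARD('a) = CHAR('a) ^ fp_degree lam"
    by (simp add: fp_span_fp_degree[OF assms])
  show ?thesis
    unfolding ff_degree_def
    by (rule the_equality) (use card prime_gt_1_nat[OF CHAR_prime[where 'a = 'a]] in simp_all)
qed

lemma fp_span_coeffs_unique:
  fixes lam :: "'a::finite_field"
  assumes "k \<le> fp_degree lam" "\<forall>i. c i \<in> prime_subfield" "\<forall>i. d i \<in> prime_subfield"
    and "(\<Sum>i<k. c i * lam ^ i) = (\<Sum>i<k. d i * lam ^ i)"
  shows "\<forall>i<k. c i = d i"
  using assms
proof (induction k)
  case (Suc k)
  have k: "k < fp_degree lam"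
    using Suc.prems(1) by simp
  have "c k = d k \<and> (\<Sum>i<k. c i * lam ^ i) = (\<Sum>i<k. d i * lam ^ i)"
  proof (rule fp_span_Suc_unique[OF power_notin_fp_span[OF k]])
    show "(\<Sum>i<k. c i * lam ^ i) \<in> fp_span lam k" "(\<Sum>i<k. d i * lam ^ i) \<in> fp_span lam k"
      by (rule fp_spanI[OF Suc.prems(2)], rule fp_spanI[OF Suc.prems(3)])
    show "c k \<in> prime_subfield" "d k \<in> prime_subfield"
      using Suc.prems(2,3) by simp_all
    show "(\<Sum>i<k. c i * lam ^ i) + c k * lam ^ k = (\<Sum>i<k. d i * lam ^ i) + d k * lam ^ k"
      using Suc.prems(4) by (simp only: sum.lessThan_Suc)
  qed
  moreover from this have "\<forall>i<k. c i = d i"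
    using k by (intro Suc.IH[OF _ Suc.prems(2,3)]) simp_all
  ultimately show ?case
    by (simp add: less_Suc_eq)
qed simp

definition is_ff_coords :: "'a::finite_field \<Rightarrow> 'a \<Rightarrow> (nat \<Rightarrow> nat) \<Rightarrow> bool" where
  "is_ff_coords lam \<alpha> c \<longleftrightarrow> (\<forall>i. c i < CHAR('a)) \<and> (\<forall>i\<ge>ff_degree TYPE('a). c i = 0) \<and>
      \<alpha> = (\<Sum>i<ff_degree TYPE('a). of_nat (c i) * lam ^ i)"

lemma is_ff_coords_unique:
  assumes lam: "primitive_element lam" and "is_ff_coords lam \<alpha> c" "is_ff_coords lam \<alpha> c'"
  shows "c = c'"
proof
  fix i
  have "\<forall>i<fp_degree lam. (of_nat (c i) :: 'a) = of_nat (c' i)"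
    using assms unfolding is_ff_coords_def ff_degree_eq_fp_degree[OF lam]
    by (intro fp_span_coeffs_unique) auto
  then show "c i = c' i"
    using assms inj_on_of_nat_CHAR[where 'a = 'a]
    unfolding is_ff_coords_def ff_degree_eq_fp_degree[OF lam]
    by (cases "i < fp_degree lam") (auto dest: inj_onD)
qed

lemma ex_is_ff_coords:
  assumes lam: "primitive_element lam"
  shows "\<exists>c. is_ff_coords lam \<alpha> c"
proof -
  obtain a where a: "\<forall>i. a i \<in> prime_subfield" "\<alpha> = (\<Sum>i<fp_degree lam. a i * lam ^ i)"
    using fp_span_fp_degree[OF lam] unfolding fp_span_def by blast
  have "\<forall>i. \<exists>j. j < CHAR('a) \<and> a i = of_nat j"
    using a(1) unfolding prime_subfield_eq by auto
  then have "\<exists>e. \<forall>i. e i < CHAR('a) \<and> a i = of_nat (e i)"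
    by (rule choice)
  then obtain e where e: "\<forall>i. e i < CHAR('a) \<and> a i = of_nat (e i)"
    by blast
  define c where "c i = (if i < fp_degree lam then e i else 0)" for i
  have "\<alpha> = (\<Sum>i<fp_degree lam. of_nat (c i) * lam ^ i)"
    unfolding a(2) by (rule sum.cong) (simp_all add: c_def e)
  moreover have "\<forall>i. c i < CHAR('a)" "\<forall>i\<ge>fp_degree lam. c i = 0"
    using e by (simp_all add: c_def)
  ultimately have "is_ff_coords lam \<alpha> c"
    unfolding is_ff_coords_def ff_degree_eq_fp_degree[OF lam] by blast
  then show ?thesis by blast
qed

lemma ff_coords_eqI:
  assumes lam: "primitive_element lam" and c: "is_ff_coords lam \<alpha> c"
  shows "ff_coords lam \<alpha> = c"
proof -
  have "(THE c. is_ff_coords lam \<alpha> c) = c"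
    by (rule the_equality[where P = "is_ff_coords lam \<alpha>", OF c]) (rule is_ff_coords_unique[OF lam _ c])
  then show ?thesis unfolding ff_coords_def is_ff_coords_def .
qed

lemma additive_char_chi_ff:
  fixes lam :: "'a::finite_field"
  assumes lam: "primitive_element lam" and \<zeta>: "\<zeta> ^ CHAR('a) = 1"
  shows "additive_char (chi_ff lam \<zeta>)"
proof -
  have "is_ff_coords lam 0 (\<lambda>_. 0)"
    by (simp add: is_ff_coords_def)
  then have zero: "chi_ff lam \<zeta> 0 = 1"
    by (simp add: chi_ff_def ff_coords_eqI[OF lam])
  have "chi_ff lam \<zeta> (a + b) = chi_ff lam \<zeta> a * chi_ff lam \<zeta> b" for a b :: 'a
  proof -
    obtain ca cb where ca: "is_ff_coords lam a ca" and cb: "is_ff_coords lam b cb"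
      using ex_is_ff_coords[OF lam] by blast
    have "is_ff_coords lam (a + b) (\<lambda>i. (ca i + cb i) mod CHAR('a))"
      using ca cb by (simp add: is_ff_coords_def sum.distrib[symmetric] distrib_right)
    then show ?thesis
      using power_mod_exponent[OF \<zeta>]
      by (simp add: chi_ff_def ff_coords_eqI[OF lam] ff_coords_eqI[OF lam ca]
          ff_coords_eqI[OF lam cb] power_add)
  qed
  with zero show ?thesis by (simp add: additive_char_def)
qed

lemma chi_ff_1:
  fixes lam :: "'a::finite_field"
  assumes lam: "primitive_element lam"
  shows "chi_ff lam \<zeta> 1 = \<zeta>"
proof -
  have "(\<Sum>i<fp_degree lam. of_nat (if i = 0 then 1 else 0) * lam ^ i)
      = (\<Sum>i<fp_degree lam. if i = 0 then 1 else 0)"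
    by (rule sum.cong) auto
  then have "is_ff_coords lam 1 (\<lambda>i. if i = 0 then 1 else 0)"
    using fp_degree_pos[of lam] prime_gt_1_nat[OF CHAR_prime[where 'a = 'a]]
    by (simp add: is_ff_coords_def ff_degree_eq_fp_degree[OF lam])
  then show ?thesis by (simp add: chi_ff_def ff_coords_eqI[OF lam])
qed

theorem mainTheorem4:
  shows
  "(\<forall>(lam::'a::finite_field) \<zeta> n (C::'a list set) w (x::'a \<times> 'a \<Rightarrow> complex).
      primitive_element lam \<longrightarrow> primitive_root_of_unity CHAR('a) \<zeta> \<longrightarrow>
      linear_code_field n C \<longrightarrow> w \<in> vecs n \<longrightarrow>
      jac_av n (dual_code n C) w x =
        jac_av n C w (subst_chi (chi_ff lam \<zeta>) x) / of_nat (card C))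
   \<and>
   (\<forall>\<zeta> n (C::'k::nontriv mod_ring list set) w (x::'k mod_ring \<times> 'k mod_ring \<Rightarrow> complex).
      primitive_root_of_unity CARD('k) \<zeta> \<longrightarrow>
      additive_code n C \<longrightarrow> w \<in> vecs n \<longrightarrow>
      jac_av n (dual_code n C) w x =
        jac_av n C w (subst_chi (chi_zk \<zeta>) x) / of_nat (card C))"
proof (intro conjI allI impI)
  fix lam :: 'a and \<zeta> n and C :: "'a list set" and w and x :: "'a \<times> 'a \<Rightarrow> complex"
  assume lam: "primitive_element lam" and \<zeta>: "primitive_root_of_unity CHAR('a) \<zeta>"
    and C: "linear_code_field n C"
  have \<chi>: "additive_char (chi_ff lam \<zeta>)"
    using additive_char_chi_ff[OF lam] \<zeta> by (simp add: primitive_root_of_unity_def)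
  have "\<zeta> ^ 1 \<noteq> 1"
    using \<zeta> prime_gt_1_nat[OF CHAR_prime[where 'a = 'a]] unfolding primitive_root_of_unity_def by blast
  then have \<chi>1: "chi_ff lam \<zeta> 1 \<noteq> 1"
    by (simp add: chi_ff_1[OF lam])
  show "jac_av n (dual_code n C) w x = jac_av n C w (subst_chi (chi_ff lam \<zeta>) x) / of_nat (card C)"
    by (rule jac_av_dual_code[OF \<chi> additive_code_if_linear_code_field[OF C]
          dual_code_if_char_trivial[where \<chi> = "chi_ff lam \<zeta>", OF C \<chi>1]])
next
  fix \<zeta> n and C :: "'k mod_ring list set" and w and x :: "'k mod_ring \<times> 'k mod_ring \<Rightarrow> complex"
  assume \<zeta>: "primitive_root_of_unity CARD('k) \<zeta>" and C: "additive_code n C"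
  have \<chi>: "additive_char (chi_zk \<zeta> :: 'k mod_ring \<Rightarrow> complex)"
    using \<zeta> by (intro additive_char_chi_zk) (simp add: primitive_root_of_unity_def)
  show "jac_av n (dual_code n C) w x = jac_av n C w (subst_chi (chi_zk \<zeta>) x) / of_nat (card C)"
    by (rule jac_av_dual_code[OF \<chi> C]) (simp add: chi_zk_eq_1_iff[OF \<zeta>] dual_code_eq)
qed

end
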